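(* In the fuzzy setting described in the context, let $(A,B,R)$ be a fuzzy context and $(g,f)\in\mathcal{F}_N$. Then $g^{\uparrow_\pi}(a)\preceq_1 g^{\uparrow_N}(a)$ for all $a\in A$.
   Context: An adjoint triple with respect to posets $(P_1,\le_1),(P_2,\le_2),(P_3,\le_3)$ is a triple of maps $\&\colon P_1\times P_2\to P_3$, $\swarrow\colon P_3\times P_2\to P_1$, $\nwarrow\colon P_3\times P_1\to P_2$ with $x\le_1 z\swarrow y \iff x\& y\le_3 z\iff y\le_2 z\nwarrow x$. Fix complete lattices $(L_1,\preceq_1)$, $(L_2,\preceq_2)$, a bounded poset $(P,\le)$, an adjoint triple $(\&_1,\swarrow^1,\nwarrow_1)$ with respect to $L_1,P,L_2$ and an adjoint triple $(\&_2,\swarrow^2,\nwarrow_2)$ with respect to $P,L_2,L_1$. A fuzzy context is $(A,B,R)$ with nonempty sets $A,B$ and $R\colon A\times B\to P$. For $g\in L_2^B$, $f\in L_1^A$ define $g^{\uparrow_N}(a)=\inf\{g(b)\swarrow^1 R(a,b)\mid b\in B\}$, $f^{\downarrow^N}(b)=\inf\{f(a)\nwarrow_2 R(a,b)\mid a\in A\}$ and $g^{\uparrow_\pi}(a)=\sup\{R(a,b)\&_2 g(b)\mid b\in B\}$. $\mathcal{F}_N=\{(g,f)\mid g\in L_2^B, f\in L_1^A, g^{\uparrow_N}=f, f^{\downarrow^N}=g\}$. *)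

theory Defs
  imports Main
begin

definition adjoint_triple ::
  "('p1::order \<Rightarrow> 'p2::order \<Rightarrow> 'p3::order) \<Rightarrow> ('p3 \<Rightarrow> 'p2 \<Rightarrow> 'p1) \<Rightarrow> ('p3 \<Rightarrow> 'p1 \<Rightarrow> 'p2) \<Rightarrow> bool" where
  "adjoint_triple cj sw nw \<longleftrightarrow>
     (\<forall>x y z. (x \<le> sw z y \<longleftrightarrow> cj x y \<le> z) \<and> (cj x y \<le> z \<longleftrightarrow> y \<le> nw z x))"

text \<open>Fuzzy context (A,B,R): nonempty sets A, B; R : A x B -> P (values outside A x B irrelevant).\<close>
definition fuzzy_context :: "'a set \<Rightarrow> 'b set \<Rightarrow> ('a \<Rightarrow> 'b \<Rightarrow> 'p) \<Rightarrow> bool" where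
  "fuzzy_context A B R \<longleftrightarrow> A \<noteq> {} \<and> B \<noteq> {}"

definition up_N ::
  "'b set \<Rightarrow> ('a \<Rightarrow> 'b \<Rightarrow> 'p) \<Rightarrow> ('l2 \<Rightarrow> 'p \<Rightarrow> 'l1::complete_lattice) \<Rightarrow> ('b \<Rightarrow> 'l2) \<Rightarrow> 'a \<Rightarrow> 'l1" where
  "up_N B R sw1 g a = (INF b\<in>B. sw1 (g b) (R a b))"

definition down_N ::
  "'a set \<Rightarrow> ('a \<Rightarrow> 'b \<Rightarrow> 'p) \<Rightarrow> ('l1 \<Rightarrow> 'p \<Rightarrow> 'l2::complete_lattice) \<Rightarrow> ('a \<Rightarrow> 'l1) \<Rightarrow> 'b \<Rightarrow> 'l2" where
  "down_N A R nw2 f b = (INF a\<in>A. nw2 (f a) (R a b))"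

definition up_pi ::
  "'b set \<Rightarrow> ('a \<Rightarrow> 'b \<Rightarrow> 'p) \<Rightarrow> ('p \<Rightarrow> 'l2 \<Rightarrow> 'l1::complete_lattice) \<Rightarrow> ('b \<Rightarrow> 'l2) \<Rightarrow> 'a \<Rightarrow> 'l1" where
  "up_pi B R conj2 g a = (SUP b\<in>B. conj2 (R a b) (g b))"

definition F_N ::
  "'a set \<Rightarrow> 'b set \<Rightarrow> ('a \<Rightarrow> 'b \<Rightarrow> 'p) \<Rightarrow> ('l2::complete_lattice \<Rightarrow> 'p \<Rightarrow> 'l1::complete_lattice)
   \<Rightarrow> ('l1 \<Rightarrow> 'p \<Rightarrow> 'l2) \<Rightarrow> (('b \<Rightarrow> 'l2) \<times> ('a \<Rightarrow> 'l1)) set" where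
  "F_N A B R sw1 nw2 = {(g, f). (\<forall>a\<in>A. up_N B R sw1 g a = f a) \<and> (\<forall>b\<in>B. down_N A R nw2 f b = g b)}"

end

theory Submission
  imports Defs
begin

(* Since g = f^{down_N}, every g(b) lies below f(a) nw_2 R(a,b), so adjointness gives
   R(a,b) &_2 g(b) <= f(a); the supremum over b yields g^{up_pi}(a) <= f(a) = g^{up_N}(a). *)

lemma adjoint_triple_conj_le_iff_le_nw:
  assumes "adjoint_triple cj sw nw"
  shows "cj x y \<le> z \<longleftrightarrow> y \<le> nw z x"
  using assms unfolding adjoint_triple_def by blast

lemma down_N_le_nw:
  assumes "a \<in> A"
  shows "down_N A R nw f b \<le> nw (f a) (R a b)"
  unfolding down_N_def using assms by (rule INF_lower)

lemma up_pi_le_if_le_down_N: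
  assumes "adjoint_triple conj2 sw2 nw2" and "a \<in> A"
    and "\<And>b. b \<in> B \<Longrightarrow> g b \<le> down_N A R nw2 f b"
  shows "up_pi B R conj2 g a \<le> f a"
  unfolding up_pi_def
proof (rule SUP_least)
  fix b assume "b \<in> B"
  have "g b \<le> nw2 (f a) (R a b)"
    using assms(3)[OF \<open>b \<in> B\<close>] down_N_le_nw[OF \<open>a \<in> A\<close>] by (rule order_trans)
  then show "conj2 (R a b) (g b) \<le> f a"
    using adjoint_triple_conj_le_iff_le_nw[OF assms(1)] by blast
qed

theorem mainTheorem10:
  fixes conj1 :: "'l1::complete_lattice \<Rightarrow> 'p::{order_bot,order_top} \<Rightarrow> 'l2::complete_lattice"
    and sw1 :: "'l2 \<Rightarrow> 'p \<Rightarrow> 'l1" and nw1 :: "'l2 \<Rightarrow> 'l1 \<Rightarrow> 'p"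
    and conj2 :: "'p \<Rightarrow> 'l2 \<Rightarrow> 'l1" and sw2 :: "'l1 \<Rightarrow> 'l2 \<Rightarrow> 'p" and nw2 :: "'l1 \<Rightarrow> 'p \<Rightarrow> 'l2"
    and A :: "'a set" and B :: "'b set" and R :: "'a \<Rightarrow> 'b \<Rightarrow> 'p"
    and g :: "'b \<Rightarrow> 'l2" and f :: "'a \<Rightarrow> 'l1"
  assumes "adjoint_triple conj1 sw1 nw1"
    and "adjoint_triple conj2 sw2 nw2"
    and "fuzzy_context A B R"
    and "(g, f) \<in> F_N A B R sw1 nw2"
  shows "\<forall>a\<in>A. up_pi B R conj2 g a \<le> up_N B R sw1 g a"
proof
  fix a assume "a \<in> A"
  have "up_pi B R conj2 g a \<le> f a"
    using assms(2) \<open>a \<in> A\<close> by (rule up_pi_le_if_le_down_N) (use assms(4) in \<open>simp add: F_N_def\<close>)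
  also have "f a = up_N B R sw1 g a"
    using assms(4) \<open>a \<in> A\<close> by (simp add: F_N_def)
  finally show "up_pi B R conj2 g a \<le> up_N B R sw1 g a" .
qed

end
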